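(* For $i\in\{1,2\}$, let $G_i$ be a graph with maximum degree $\Delta_i$ and degeneracy $d_i$ that contains $K_{s_i,t_i}$ as a subgraph, where $1\leq s_i\leq t_i$. Let $$f(s_1,t_1,s_2,t_2):=\max\{s_1+s_2+s_1s_2,\ \min\{t_1+t_2,\ s_1(t_2+1),\ s_2(t_1+1)\},\ \min\{s_1t_2,\ s_2t_1\}\}.$$ Then $$\max\{d_1+d_2+d_1d_2,\ f(s_1,t_1,s_2,t_2),\ \min\{\Delta_1,\Delta_2\}+1\}\ \leq\ \operatorname{degen}(G_1\boxtimes G_2)\ \leq\ d_1+d_2+\min\{d_1\Delta_2,\ d_2\Delta_1\}.$$
   Context: The degeneracy $\operatorname{degen}(G)$ of a graph $G$ is the minimum integer $d$ such that every subgraph of $G$ has minimum degree at most $d$. The strong product $G_1 \boxtimes G_2$ has vertex set $V(G_1)\times V(G_2)$, with distinct vertices $(a,v),(b,u)$ adjacent iff ($a=b$ or $ab\in E(G_1)$) and ($u=v$ or $uv\in E(G_2)$). *)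

theory Defs
  imports Main
begin

definition sgraph :: "'a set \<Rightarrow> ('a \<Rightarrow> 'a \<Rightarrow> bool) \<Rightarrow> bool" where
  "sgraph V E \<longleftrightarrow> finite V \<and> (\<forall>u v. E u v \<longrightarrow> u \<in> V \<and> v \<in> V)
     \<and> (\<forall>u v. E u v \<longrightarrow> E v u) \<and> (\<forall>v. \<not> E v v)"

definition degree :: "'a set \<Rightarrow> ('a \<Rightarrow> 'a \<Rightarrow> bool) \<Rightarrow> 'a \<Rightarrow> nat" where
  "degree V E v = card {u \<in> V. E v u}"

definition max_degree :: "'a set \<Rightarrow> ('a \<Rightarrow> 'a \<Rightarrow> bool) \<Rightarrow> nat" where
  "max_degree V E = Max (insert 0 (degree V E ` V))"

definition min_degree :: "'a set \<Rightarrow> ('a \<Rightarrow> 'a \<Rightarrow> bool) \<Rightarrow> nat" where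
  "min_degree V E = Min (degree V E ` V)"

definition subgraph :: "'a set \<Rightarrow> ('a \<Rightarrow> 'a \<Rightarrow> bool) \<Rightarrow> 'a set \<Rightarrow> ('a \<Rightarrow> 'a \<Rightarrow> bool) \<Rightarrow> bool" where
  "subgraph W F V E \<longleftrightarrow> sgraph W F \<and> W \<subseteq> V \<and> (\<forall>u v. F u v \<longrightarrow> E u v)"

definition degen :: "'a set \<Rightarrow> ('a \<Rightarrow> 'a \<Rightarrow> bool) \<Rightarrow> nat" where
  "degen V E = (LEAST d. \<forall>W F. subgraph W F V E \<and> W \<noteq> {} \<longrightarrow> min_degree W F \<le> d)"

definition strong_prod_V :: "'a set \<Rightarrow> 'b set \<Rightarrow> ('a \<times> 'b) set" where
  "strong_prod_V V1 V2 = V1 \<times> V2"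

definition strong_prod_E :: "'a set \<Rightarrow> ('a \<Rightarrow> 'a \<Rightarrow> bool) \<Rightarrow> 'b set \<Rightarrow> ('b \<Rightarrow> 'b \<Rightarrow> bool)
    \<Rightarrow> ('a \<times> 'b) \<Rightarrow> ('a \<times> 'b) \<Rightarrow> bool" where
  "strong_prod_E V1 E1 V2 E2 x y \<longleftrightarrow>
     x \<in> V1 \<times> V2 \<and> y \<in> V1 \<times> V2 \<and> x \<noteq> y \<and>
     (fst x = fst y \<or> E1 (fst x) (fst y)) \<and> (snd x = snd y \<or> E2 (snd x) (snd y))"

definition contains_Kst :: "'a set \<Rightarrow> ('a \<Rightarrow> 'a \<Rightarrow> bool) \<Rightarrow> nat \<Rightarrow> nat \<Rightarrow> bool" where
  "contains_Kst V E s t \<longleftrightarrow> (\<exists>A B. A \<subseteq> V \<and> B \<subseteq> V \<and> A \<inter> B = {} \<and> card A = s \<and> card B = t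
       \<and> (\<forall>a\<in>A. \<forall>b\<in>B. E a b))"

definition fKst :: "nat \<Rightarrow> nat \<Rightarrow> nat \<Rightarrow> nat \<Rightarrow> nat" where
  "fKst s1 t1 s2 t2 = max (s1 + s2 + s1 * s2)
      (max (min (t1 + t2) (min (s1 * (t2 + 1)) (s2 * (t1 + 1)))) (min (s1 * t2) (s2 * t1)))"

end

theory Submission
  imports Defs
begin

text \<open>The degeneracy is at most k iff every nonempty vertex set W contains a vertex with at
most k neighbours inside W. Lower bounds therefore come from vertex sets of the product in which
every vertex has many neighbours inside the set: the product of two such sets of the factors
(which turns inner degrees k1, k2 into (k1+1)(k2+1) - 1), and three sets assembled from the parts
of K_{s1,t1} and K_{s2,t2}. The star at a vertex of maximum degree is a K_{1,\<Delta>}, so the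
\<Delta>-bound is the case s1 = s2 = 1 of the K_{s,t}-bound. For the upper bound, given W choose a
vertex a with at most d1 neighbours in the projection of W to G1, then b with at most d2
neighbours in the fibre of W over a; then (a,b) has at most d2 + d1 (\<Delta>2 + 1) neighbours in W.
Exchanging the factors gives the other term of the minimum.\<close>

definition mindeg_ge :: "('a \<Rightarrow> 'a \<Rightarrow> bool) \<Rightarrow> 'a set \<Rightarrow> nat \<Rightarrow> bool" where
  "mindeg_ge E W k \<longleftrightarrow> W \<noteq> {} \<and> (\<forall>v\<in>W. k \<le> card {u\<in>W. E v u})"

lemma mindeg_geI:
  assumes "finite W" "W \<noteq> {}"
    and "\<And>v. v \<in> W \<Longrightarrow> \<exists>S\<subseteq>W. k \<le> card S \<and> (\<forall>u\<in>S. E v u)"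
  shows "mindeg_ge E W k"
  unfolding mindeg_ge_def
proof (intro conjI ballI \<open>W \<noteq> {}\<close>)
  fix v assume "v \<in> W"
  then obtain S where S: "S \<subseteq> W" "k \<le> card S" "\<forall>u\<in>S. E v u" using assms(3) by blast
  have "card S \<le> card {u\<in>W. E v u}" using \<open>finite W\<close> S by (intro card_mono) auto
  with S show "k \<le> card {u\<in>W. E v u}" by linarith
qed

lemma min_degree_le_degen:
  assumes "sgraph V E" "subgraph W F V E" "W \<noteq> {}"
  shows "min_degree W F \<le> degen V E"
proof -
  let ?P = "\<lambda>d. \<forall>W F. subgraph W F V E \<and> W \<noteq> {} \<longrightarrow> min_degree W F \<le> d"
  have "?P (card V)"
  proof (intro allI impI)
    fix W F assume "subgraph W F V E \<and> W \<noteq> {}"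
    then have sg: "sgraph W F" and "W \<subseteq> V" "W \<noteq> {}" unfolding subgraph_def by auto
    then obtain w where "w \<in> W" by auto
    have "finite V" using assms(1) unfolding sgraph_def by simp
    have "min_degree W F \<le> degree W F w"
      unfolding min_degree_def using sg \<open>w \<in> W\<close> unfolding sgraph_def by (intro Min_le) auto
    also have "\<dots> \<le> card W"
      unfolding degree_def by (rule card_mono) (use \<open>finite V\<close> \<open>W \<subseteq> V\<close> finite_subset in auto)
    also have "\<dots> \<le> card V" by (rule card_mono) fact+
    finally show "min_degree W F \<le> card V" .
  qed
  then have "?P (degen V E)" unfolding degen_def by (rule LeastI)
  then show ?thesis using assms(2,3) by blast
qed

lemma degen_le_iff:
  assumes "sgraph V E"
  shows "degen V E \<le> k \<longleftrightarrow> (\<forall>W\<subseteq>V. W \<noteq> {} \<longrightarrow> (\<exists>w\<in>W. card {u\<in>W. E w u} \<le> k))"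
proof
  assume le: "degen V E \<le> k"
  show "\<forall>W\<subseteq>V. W \<noteq> {} \<longrightarrow> (\<exists>w\<in>W. card {u\<in>W. E w u} \<le> k)"
  proof (intro allI impI)
    fix W assume "W \<subseteq> V" "W \<noteq> {}"
    define F where "F x y \<longleftrightarrow> E x y \<and> x \<in> W \<and> y \<in> W" for x y
    have "finite W" using assms \<open>W \<subseteq> V\<close> finite_subset unfolding sgraph_def by blast
    have "subgraph W F V E"
      using assms \<open>W \<subseteq> V\<close> \<open>finite W\<close> unfolding subgraph_def sgraph_def F_def by auto
    have "min_degree W F \<in> degree W F ` W"
      unfolding min_degree_def using \<open>finite W\<close> \<open>W \<noteq> {}\<close> by (intro Min_in) auto
    then obtain w where "w \<in> W" "degree W F w = min_degree W F" by auto
    moreover have "degree W F w = card {u\<in>W. E w u}"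
      unfolding degree_def F_def using \<open>w \<in> W\<close> by (metis (lifting))
    moreover have "min_degree W F \<le> degen V E"
      using min_degree_le_degen[OF assms \<open>subgraph W F V E\<close> \<open>W \<noteq> {}\<close>] .
    ultimately show "\<exists>w\<in>W. card {u\<in>W. E w u} \<le> k" using le by (metis order.trans)
  qed
next
  assume low: "\<forall>W\<subseteq>V. W \<noteq> {} \<longrightarrow> (\<exists>w\<in>W. card {u\<in>W. E w u} \<le> k)"
  show "degen V E \<le> k"
    unfolding degen_def
  proof (intro Least_le allI impI)
    fix W F assume "subgraph W F V E \<and> W \<noteq> {}"
    then have sg: "sgraph W F" and FE: "\<And>u v. F u v \<Longrightarrow> E u v" and "W \<subseteq> V" "W \<noteq> {}"
      unfolding subgraph_def by auto
    then obtain w where "w \<in> W" "card {u\<in>W. E w u} \<le> k" using low by blast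
    have "finite W" using sg unfolding sgraph_def by simp
    have "min_degree W F \<le> degree W F w"
      unfolding min_degree_def using \<open>finite W\<close> \<open>w \<in> W\<close> by (intro Min_le) auto
    also have "\<dots> \<le> card {u\<in>W. E w u}"
      unfolding degree_def using \<open>finite W\<close> FE by (intro card_mono) auto
    finally show "min_degree W F \<le> k" using \<open>card {u\<in>W. E w u} \<le> k\<close> by simp
  qed
qed

lemma degen_low_vertex:
  assumes "sgraph V E" "W \<subseteq> V" "W \<noteq> {}"
  obtains w where "w \<in> W" "card {u\<in>W. E w u} \<le> degen V E"
  using degen_le_iff[OF assms(1), of "degen V E"] assms(2,3) by blast

lemma mindeg_ge_le_degen:
  assumes "sgraph V E" "W \<subseteq> V" "mindeg_ge E W k"
  shows "k \<le> degen V E"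
proof -
  have "W \<noteq> {}" using assms(3) unfolding mindeg_ge_def by simp
  then obtain w where "w \<in> W" "card {u\<in>W. E w u} \<le> degen V E"
    using degen_low_vertex[OF assms(1,2)] by blast
  then show ?thesis using assms(3) unfolding mindeg_ge_def by force
qed

lemma ex_mindeg_ge_degen:
  assumes "sgraph V E" "V \<noteq> {}"
  obtains W where "W \<subseteq> V" "mindeg_ge E W (degen V E)"
proof (cases "degen V E = 0")
  case True
  then show ?thesis using that[of V] assms(2) unfolding mindeg_ge_def by simp
next
  case False
  then have "\<not> degen V E \<le> degen V E - 1" by simp
  then obtain W where "W \<subseteq> V" "W \<noteq> {}" "\<forall>w\<in>W. degen V E - 1 < card {u\<in>W. E w u}"
    unfolding degen_le_iff[OF assms(1)] by (auto simp: not_le)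
  moreover have "degen V E \<le> c" if "degen V E - 1 < c" for c using False that by linarith
  ultimately show ?thesis using that[of W] unfolding mindeg_ge_def by blast
qed

lemma sgraph_strong_prod:
  assumes "sgraph V1 E1" "sgraph V2 E2"
  shows "sgraph (strong_prod_V V1 V2) (strong_prod_E V1 E1 V2 E2)"
  using assms unfolding sgraph_def strong_prod_V_def strong_prod_E_def by auto

lemma strong_prod_E_Pair:
  "strong_prod_E V1 E1 V2 E2 (a, b) (x, y) \<longleftrightarrow>
     a \<in> V1 \<and> b \<in> V2 \<and> x \<in> V1 \<and> y \<in> V2 \<and> (a, b) \<noteq> (x, y) \<and> (a = x \<or> E1 a x) \<and> (b = y \<or> E2 b y)"
  unfolding strong_prod_E_def by auto

lemma strong_prod_E_swap:
  "strong_prod_E V2 E2 V1 E1 (prod.swap x) (prod.swap y) \<longleftrightarrow> strong_prod_E V1 E1 V2 E2 x y"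
  unfolding strong_prod_E_def by (cases x, cases y) auto

lemma mindeg_ge_strong_prod:
  assumes g1: "sgraph V1 E1" and g2: "sgraph V2 E2"
    and "W1 \<subseteq> V1" and W1: "mindeg_ge E1 W1 k1" and "W2 \<subseteq> V2" and W2: "mindeg_ge E2 W2 k2"
  shows "mindeg_ge (strong_prod_E V1 E1 V2 E2) (W1 \<times> W2) (k1 + k2 + k1 * k2)"
proof (rule mindeg_geI)
  have "finite W1" "finite W2"
    using g1 g2 \<open>W1 \<subseteq> V1\<close> \<open>W2 \<subseteq> V2\<close> finite_subset unfolding sgraph_def by blast+
  then show "finite (W1 \<times> W2)" by simp
  show "W1 \<times> W2 \<noteq> {}" using W1 W2 unfolding mindeg_ge_def by simp
  fix v assume "v \<in> W1 \<times> W2"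
  then obtain a b where v: "v = (a, b)" "a \<in> W1" "b \<in> W2" by auto
  define N1 where "N1 = {u\<in>W1. E1 a u}"
  define N2 where "N2 = {u\<in>W2. E2 b u}"
  have "a \<notin> N1" "b \<notin> N2" using g1 g2 unfolding N1_def N2_def sgraph_def by auto
  have "finite N1" "finite N2" using \<open>finite W1\<close> \<open>finite W2\<close> unfolding N1_def N2_def by simp_all
  have "k1 \<le> card N1" "k2 \<le> card N2" using W1 W2 v unfolding N1_def N2_def mindeg_ge_def by auto
  define S where "S = (insert a N1 \<times> insert b N2) - {(a, b)}"
  have "card S = card (insert a N1 \<times> insert b N2) - 1"
    unfolding S_def using \<open>finite N1\<close> \<open>finite N2\<close> by (intro card_Diff_singleton) auto
  also have "\<dots> = (card N1 + 1) * (card N2 + 1) - 1"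
    unfolding card_cartesian_product using \<open>finite N1\<close> \<open>finite N2\<close> \<open>a \<notin> N1\<close> \<open>b \<notin> N2\<close> by simp
  also have "k1 + k2 + k1 * k2 \<le> \<dots>"
  proof -
    have "(k1 + 1) * (k2 + 1) \<le> (card N1 + 1) * (card N2 + 1)"
      using \<open>k1 \<le> card N1\<close> \<open>k2 \<le> card N2\<close> by (intro mult_le_mono) auto
    then show ?thesis by simp
  qed
  finally have "k1 + k2 + k1 * k2 \<le> card S" .
  moreover have "S \<subseteq> W1 \<times> W2" using v unfolding S_def N1_def N2_def by auto
  moreover have "\<forall>u\<in>S. strong_prod_E V1 E1 V2 E2 v u"
    using v \<open>W1 \<subseteq> V1\<close> \<open>W2 \<subseteq> V2\<close> unfolding S_def N1_def N2_def by (auto simp: strong_prod_E_Pair)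
  ultimately show "\<exists>S\<subseteq>W1 \<times> W2. k1 + k2 + k1 * k2 \<le> card S \<and> (\<forall>u\<in>S. strong_prod_E V1 E1 V2 E2 v u)"
    by blast
qed

lemma ex_max_degree_vertex:
  assumes "sgraph V E" "V \<noteq> {}"
  obtains v where "v \<in> V" "degree V E v = max_degree V E"
proof -
  have "finite V" using assms(1) unfolding sgraph_def by simp
  then have "max_degree V E = Max (degree V E ` V)"
    unfolding max_degree_def using assms(2) by (simp add: Max_insert)
  also have "\<dots> \<in> degree V E ` V" using \<open>finite V\<close> assms(2) by (intro Max_in) auto
  finally show ?thesis using that by auto
qed

lemma max_degree_pos:
  assumes "sgraph V E" "E p q"
  shows "0 < max_degree V E"
proof -
  have "finite V" "p \<in> V" "q \<in> V" using assms unfolding sgraph_def by auto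
  then have "0 < degree V E p" unfolding degree_def using assms(2) by (auto simp: card_gt_0_iff)
  also have "degree V E p \<le> max_degree V E"
    unfolding max_degree_def using \<open>finite V\<close> \<open>p \<in> V\<close> by (intro Max_ge) auto
  finally show ?thesis .
qed

definition biclique :: "'a set \<Rightarrow> ('a \<Rightarrow> 'a \<Rightarrow> bool) \<Rightarrow> 'a set \<Rightarrow> 'a set \<Rightarrow> bool" where
  "biclique V E A B \<longleftrightarrow>
     A \<subseteq> V \<and> B \<subseteq> V \<and> A \<noteq> {} \<and> B \<noteq> {} \<and> A \<inter> B = {} \<and> (\<forall>a\<in>A. \<forall>b\<in>B. E a b)"

lemma contains_Kst_biclique:
  assumes "contains_Kst V E s t" "1 \<le> s" "1 \<le> t"
  obtains A B where "biclique V E A B" "card A = s" "card B = t"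
proof -
  obtain A B where AB: "A \<subseteq> V" "B \<subseteq> V" "A \<inter> B = {}" "\<forall>a\<in>A. \<forall>b\<in>B. E a b"
    and card: "card A = s" "card B = t"
    using assms(1) unfolding contains_Kst_def by blast
  moreover have "A \<noteq> {}" "B \<noteq> {}" using assms(2,3) card by auto
  ultimately show ?thesis using that unfolding biclique_def by blast
qed

lemma biclique_nbrs:
  assumes "sgraph V E" "v \<in> V" "0 < degree V E v"
  shows "biclique V E {v} {u\<in>V. E v u}"
  using assms unfolding biclique_def sgraph_def degree_def by (auto simp: card_gt_0_iff)

lemma biclique_finite:
  assumes "sgraph V E" "biclique V E A B"
  shows "finite A" "finite B"
  using assms finite_subset unfolding sgraph_def biclique_def by blast+

lemma biclique_adj:
  assumes "sgraph V E" "biclique V E A B" "a \<in> A" "b \<in> B"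
  shows "E a b" "E b a" "a \<noteq> b"
  using assms unfolding sgraph_def biclique_def by blast+

lemma mindeg_ge_biclique:
  assumes "sgraph V E" "biclique V E A B"
  shows "mindeg_ge E (A \<union> B) (min (card A) (card B))"
proof (rule mindeg_geI)
  show "finite (A \<union> B)" "A \<union> B \<noteq> {}"
    using biclique_finite[OF assms] assms(2) unfolding biclique_def by auto
  fix v assume "v \<in> A \<union> B"
  then show "\<exists>S\<subseteq>A \<union> B. min (card A) (card B) \<le> card S \<and> (\<forall>u\<in>S. E v u)"
    using biclique_adj[OF assms] by (metis Un_upper1 Un_upper2 UnE min.cobounded1 min.cobounded2)
qed

lemma mindeg_ge_strong_prod_biclique:
  assumes g1: "sgraph V1 E1" and g2: "sgraph V2 E2"
    and K1: "biclique V1 E1 A1 B1" and K2: "biclique V2 E2 A2 B2"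
  shows "mindeg_ge (strong_prod_E V1 E1 V2 E2) (A1 \<times> A2 \<union> A1 \<times> B2 \<union> B1 \<times> A2)
           (min (card B1 + card B2) (min (card A1 * (card B2 + 1)) (card A2 * (card B1 + 1))))"
    (is "mindeg_ge ?E ?W ?k")
proof (rule mindeg_geI)
  note fin = biclique_finite[OF g1 K1] biclique_finite[OF g2 K2]
  note adj1 = biclique_adj[OF g1 K1] and adj2 = biclique_adj[OF g2 K2]
  have sub: "A1 \<subseteq> V1" "B1 \<subseteq> V1" "A2 \<subseteq> V2" "B2 \<subseteq> V2" "A1 \<noteq> {}" "A2 \<noteq> {}"
    using K1 K2 unfolding biclique_def by auto
  show "finite ?W" using fin by simp
  show "?W \<noteq> {}" using sub by simp
  fix v assume "v \<in> ?W"
  then consider a b where "v = (a, b)" "a \<in> A1" "b \<in> A2"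
    | a b where "v = (a, b)" "a \<in> A1" "b \<in> B2"
    | a b where "v = (a, b)" "a \<in> B1" "b \<in> A2"
    by auto
  then show "\<exists>S\<subseteq>?W. ?k \<le> card S \<and> (\<forall>u\<in>S. ?E v u)"
  proof cases
    case 1
    have nbrs: "\<forall>x\<in>B1. E1 a x \<and> a \<noteq> x" "\<forall>y\<in>B2. E2 b y \<and> b \<noteq> y" using 1 adj1 adj2 by blast+
    then have "card ({a} \<times> B2 \<union> B1 \<times> {b}) = card B2 + card B1"
      using fin by (subst card_Un_disjoint) (auto simp: card_cartesian_product)
    moreover have "\<forall>u\<in>{a} \<times> B2 \<union> B1 \<times> {b}. ?E v u"
      using 1 sub nbrs by (auto simp: strong_prod_E_Pair)
    ultimately show ?thesis using 1 by (intro exI[of _ "{a} \<times> B2 \<union> B1 \<times> {b}"]) auto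
  next
    case 2
    have nbrs: "\<forall>x\<in>B1. E1 a x \<and> a \<noteq> x" "\<forall>y\<in>A2. E2 b y \<and> b \<noteq> y" using 2 adj1 adj2 by blast+
    then have "card (insert a B1 \<times> A2) = (card B1 + 1) * card A2"
      using fin by (auto simp: card_cartesian_product)
    moreover have "\<forall>u\<in>insert a B1 \<times> A2. ?E v u"
      using 2 sub nbrs by (auto simp: strong_prod_E_Pair)
    ultimately show ?thesis using 2 by (intro exI[of _ "insert a B1 \<times> A2"]) (auto simp: mult.commute)
  next
    case 3
    have nbrs: "\<forall>x\<in>A1. E1 a x \<and> a \<noteq> x" "\<forall>y\<in>B2. E2 b y \<and> b \<noteq> y" using 3 adj1 adj2 by blast+
    then have "card (A1 \<times> insert b B2) = card A1 * (card B2 + 1)"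
      using fin by (auto simp: card_cartesian_product)
    moreover have "\<forall>u\<in>A1 \<times> insert b B2. ?E v u"
      using 3 sub nbrs by (auto simp: strong_prod_E_Pair)
    ultimately show ?thesis using 3 by (intro exI[of _ "A1 \<times> insert b B2"]) auto
  qed
qed

lemma mindeg_ge_strong_prod_biclique_cross:
  assumes g1: "sgraph V1 E1" and g2: "sgraph V2 E2"
    and K1: "biclique V1 E1 A1 B1" and K2: "biclique V2 E2 A2 B2"
  shows "mindeg_ge (strong_prod_E V1 E1 V2 E2) (A1 \<times> B2 \<union> B1 \<times> A2)
           (min (card A1 * card B2) (card A2 * card B1))"
    (is "mindeg_ge ?E ?W ?k")
proof (rule mindeg_geI)
  note fin = biclique_finite[OF g1 K1] biclique_finite[OF g2 K2]
  note adj1 = biclique_adj[OF g1 K1] and adj2 = biclique_adj[OF g2 K2]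
  have sub: "A1 \<subseteq> V1" "B1 \<subseteq> V1" "A2 \<subseteq> V2" "B2 \<subseteq> V2" "A1 \<noteq> {}" "B2 \<noteq> {}"
    using K1 K2 unfolding biclique_def by auto
  show "finite ?W" using fin by simp
  show "?W \<noteq> {}" using sub by simp
  fix v assume "v \<in> ?W"
  then consider a b where "v = (a, b)" "a \<in> A1" "b \<in> B2"
    | a b where "v = (a, b)" "a \<in> B1" "b \<in> A2"
    by auto
  then show "\<exists>S\<subseteq>?W. ?k \<le> card S \<and> (\<forall>u\<in>S. ?E v u)"
  proof cases
    case 1
    have nbrs: "\<forall>x\<in>B1. E1 a x \<and> a \<noteq> x" "\<forall>y\<in>A2. E2 b y \<and> b \<noteq> y" using 1 adj1 adj2 by blast+
    then have "\<forall>u\<in>B1 \<times> A2. ?E v u" using 1 sub by (auto simp: strong_prod_E_Pair)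
    then show ?thesis by (intro exI[of _ "B1 \<times> A2"]) (auto simp: card_cartesian_product mult.commute)
  next
    case 2
    have nbrs: "\<forall>x\<in>A1. E1 a x \<and> a \<noteq> x" "\<forall>y\<in>B2. E2 b y \<and> b \<noteq> y" using 2 adj1 adj2 by blast+
    then have "\<forall>u\<in>A1 \<times> B2. ?E v u" using 2 sub by (auto simp: strong_prod_E_Pair)
    then show ?thesis by (intro exI[of _ "A1 \<times> B2"]) (auto simp: card_cartesian_product)
  qed
qed

lemma strong_prod_low_vertex:
  assumes g1: "sgraph V1 E1" and g2: "sgraph V2 E2" and "W \<subseteq> V1 \<times> V2" "W \<noteq> {}"
  obtains w where "w \<in> W"
    "card {u\<in>W. strong_prod_E V1 E1 V2 E2 w u} \<le> degen V1 E1 + degen V2 E2 + degen V1 E1 * max_degree V2 E2"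
proof -
  define A where "A = fst ` W"
  have "A \<subseteq> V1" "A \<noteq> {}" using assms(3,4) unfolding A_def by auto
  then obtain a where "a \<in> A" and low_a: "card {x\<in>A. E1 a x} \<le> degen V1 E1"
    using degen_low_vertex[OF g1] by blast
  define B where "B = {y. (a, y) \<in> W}"
  have "B \<subseteq> V2" "B \<noteq> {}" using assms(3) \<open>a \<in> A\<close> unfolding A_def B_def by force+
  then obtain b where "b \<in> B" and low_b: "card {y\<in>B. E2 b y} \<le> degen V2 E2"
    using degen_low_vertex[OF g2] by blast
  have "b \<in> V2" using \<open>b \<in> B\<close> \<open>B \<subseteq> V2\<close> by blast
  have fin: "finite V1" "finite V2" using g1 g2 unfolding sgraph_def by simp_all
  then have "finite A" "finite B" using \<open>A \<subseteq> V1\<close> \<open>B \<subseteq> V2\<close> finite_subset by blast+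
  let ?N = "{u\<in>W. strong_prod_E V1 E1 V2 E2 (a, b) u}"
  have "?N \<subseteq> {a} \<times> {y\<in>B. E2 b y} \<union> {x\<in>A. E1 a x} \<times> insert b {y\<in>V2. E2 b y}"
    unfolding A_def B_def by (force simp: strong_prod_E_Pair)
  then have "card ?N \<le> card ({a} \<times> {y\<in>B. E2 b y} \<union> {x\<in>A. E1 a x} \<times> insert b {y\<in>V2. E2 b y})"
    using fin \<open>finite A\<close> \<open>finite B\<close> by (intro card_mono) auto
  also have "\<dots> \<le> card {y\<in>B. E2 b y} + card {x\<in>A. E1 a x} * card (insert b {y\<in>V2. E2 b y})"
    by (rule order.trans[OF card_Un_le]) (simp add: card_cartesian_product)
  also have "card (insert b {y\<in>V2. E2 b y}) \<le> max_degree V2 E2 + 1"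
  proof -
    have "card (insert b {y\<in>V2. E2 b y}) \<le> degree V2 E2 b + 1"
      unfolding degree_def using fin by (simp add: card_insert_if)
    also have "degree V2 E2 b \<le> max_degree V2 E2"
      unfolding max_degree_def using fin \<open>b \<in> V2\<close> by (intro Max_ge) auto
    finally show ?thesis by simp
  qed
  finally have "card ?N \<le> degen V2 E2 + degen V1 E1 * (max_degree V2 E2 + 1)"
    using low_a low_b by (meson add_mono mult_le_mono order.trans order.refl)
  then show ?thesis using that \<open>b \<in> B\<close> unfolding B_def by (simp add: algebra_simps)
qed

lemma degen_strong_prod_le:
  assumes g1: "sgraph V1 E1" and g2: "sgraph V2 E2"
  shows "degen (strong_prod_V V1 V2) (strong_prod_E V1 E1 V2 E2)
           \<le> degen V1 E1 + degen V2 E2 + min (degen V1 E1 * max_degree V2 E2) (degen V2 E2 * max_degree V1 E1)"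
  unfolding degen_le_iff[OF sgraph_strong_prod[OF g1 g2]]
proof (intro allI impI)
  fix W assume W: "W \<subseteq> strong_prod_V V1 V2" "W \<noteq> {}"
  let ?N = "\<lambda>w. card {u\<in>W. strong_prod_E V1 E1 V2 E2 w u}"
  obtain w1 where "w1 \<in> W" "?N w1 \<le> degen V1 E1 + degen V2 E2 + degen V1 E1 * max_degree V2 E2"
    using strong_prod_low_vertex[OF g1 g2] W unfolding strong_prod_V_def by blast
  moreover obtain w2 where "w2 \<in> W" "?N w2 \<le> degen V1 E1 + degen V2 E2 + degen V2 E2 * max_degree V1 E1"
  proof -
    have "prod.swap ` W \<subseteq> V2 \<times> V1" "prod.swap ` W \<noteq> {}" using W unfolding strong_prod_V_def by auto
    then obtain w where w: "w \<in> prod.swap ` W"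
      "card {u\<in>prod.swap ` W. strong_prod_E V2 E2 V1 E1 w u}
         \<le> degen V2 E2 + degen V1 E1 + degen V2 E2 * max_degree V1 E1"
      using strong_prod_low_vertex[OF g2 g1] by blast
    have "{u\<in>prod.swap ` W. strong_prod_E V2 E2 V1 E1 w u}
            = prod.swap ` {u\<in>W. strong_prod_E V1 E1 V2 E2 (prod.swap w) u}"
      using strong_prod_E_swap[of V2 E2 V1 E1 "prod.swap w"] by force
    then have "?N (prod.swap w) = card {u\<in>prod.swap ` W. strong_prod_E V2 E2 V1 E1 w u}"
      by (simp add: card_image)
    then show ?thesis using that[of "prod.swap w"] w by auto
  qed
  ultimately show "\<exists>w\<in>W. ?N w \<le> degen V1 E1 + degen V2 E2
                            + min (degen V1 E1 * max_degree V2 E2) (degen V2 E2 * max_degree V1 E1)"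
    by (cases "degen V1 E1 * max_degree V2 E2 \<le> degen V2 E2 * max_degree V1 E1") (auto simp: min_def)
qed

lemma degen_strong_prod_ge_degen:
  assumes g1: "sgraph V1 E1" and g2: "sgraph V2 E2" and "V1 \<noteq> {}" "V2 \<noteq> {}"
  shows "degen V1 E1 + degen V2 E2 + degen V1 E1 * degen V2 E2
           \<le> degen (strong_prod_V V1 V2) (strong_prod_E V1 E1 V2 E2)"
proof -
  obtain W1 where W1: "W1 \<subseteq> V1" "mindeg_ge E1 W1 (degen V1 E1)"
    using ex_mindeg_ge_degen[OF g1 \<open>V1 \<noteq> {}\<close>] .
  obtain W2 where W2: "W2 \<subseteq> V2" "mindeg_ge E2 W2 (degen V2 E2)"
    using ex_mindeg_ge_degen[OF g2 \<open>V2 \<noteq> {}\<close>] .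
  have "W1 \<times> W2 \<subseteq> strong_prod_V V1 V2" using W1 W2 unfolding strong_prod_V_def by blast
  then show ?thesis
    by (rule mindeg_ge_le_degen[OF sgraph_strong_prod[OF g1 g2]]) (rule mindeg_ge_strong_prod[OF g1 g2 W1 W2])
qed

lemma degen_strong_prod_ge_fKst:
  assumes g1: "sgraph V1 E1" and g2: "sgraph V2 E2"
    and K1: "biclique V1 E1 A1 B1" "card A1 \<le> card B1"
    and K2: "biclique V2 E2 A2 B2" "card A2 \<le> card B2"
  shows "fKst (card A1) (card B1) (card A2) (card B2)
           \<le> degen (strong_prod_V V1 V2) (strong_prod_E V1 E1 V2 E2)"
proof -
  note lower = mindeg_ge_le_degen[OF sgraph_strong_prod[OF g1 g2]]
  have sub: "A1 \<union> B1 \<subseteq> V1" "A2 \<union> B2 \<subseteq> V2" using K1(1) K2(1) unfolding biclique_def by auto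
  then have "(A1 \<union> B1) \<times> (A2 \<union> B2) \<subseteq> strong_prod_V V1 V2"
    "A1 \<times> A2 \<union> A1 \<times> B2 \<union> B1 \<times> A2 \<subseteq> strong_prod_V V1 V2"
    "A1 \<times> B2 \<union> B1 \<times> A2 \<subseteq> strong_prod_V V1 V2"
    unfolding strong_prod_V_def by auto
  note W = lower[OF this(1)] lower[OF this(2)] lower[OF this(3)]
  have "mindeg_ge E1 (A1 \<union> B1) (card A1)" "mindeg_ge E2 (A2 \<union> B2) (card A2)"
    using mindeg_ge_biclique[OF g1 K1(1)] mindeg_ge_biclique[OF g2 K2(1)] K1(2) K2(2)
    by (simp_all add: min_absorb1)
  then show ?thesis
    unfolding fKst_def
    by (intro max.boundedI W(1) W(2) W(3) mindeg_ge_strong_prod[OF g1 g2 sub(1) _ sub(2)]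
        mindeg_ge_strong_prod_biclique[OF g1 g2 K1(1) K2(1)]
        mindeg_ge_strong_prod_biclique_cross[OF g1 g2 K1(1) K2(1)])
qed

lemma degen_strong_prod_ge_max_degree:
  assumes g1: "sgraph V1 E1" and g2: "sgraph V2 E2" and "E1 p1 q1" "E2 p2 q2"
  shows "min (max_degree V1 E1) (max_degree V2 E2) + 1
           \<le> degen (strong_prod_V V1 V2) (strong_prod_E V1 E1 V2 E2)"
proof -
  have pos: "0 < max_degree V1 E1" "0 < max_degree V2 E2"
    using max_degree_pos[OF g1 \<open>E1 p1 q1\<close>] max_degree_pos[OF g2 \<open>E2 p2 q2\<close>] .
  have "V1 \<noteq> {}" "V2 \<noteq> {}" using g1 g2 assms(3,4) unfolding sgraph_def by auto
  obtain v1 where v1: "v1 \<in> V1" "card {u\<in>V1. E1 v1 u} = max_degree V1 E1"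
    using ex_max_degree_vertex[OF g1 \<open>V1 \<noteq> {}\<close>] unfolding degree_def .
  obtain v2 where v2: "v2 \<in> V2" "card {u\<in>V2. E2 v2 u} = max_degree V2 E2"
    using ex_max_degree_vertex[OF g2 \<open>V2 \<noteq> {}\<close>] unfolding degree_def .
  have "biclique V1 E1 {v1} {u\<in>V1. E1 v1 u}" "biclique V2 E2 {v2} {u\<in>V2. E2 v2 u}"
    using biclique_nbrs[OF g1 v1(1)] biclique_nbrs[OF g2 v2(1)] v1(2) v2(2) pos
    unfolding degree_def by simp_all
  then have "fKst 1 (max_degree V1 E1) 1 (max_degree V2 E2)
               \<le> degen (strong_prod_V V1 V2) (strong_prod_E V1 E1 V2 E2)"
    using degen_strong_prod_ge_fKst[OF g1 g2] v1(2) v2(2) pos by fastforce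
  moreover have "min (max_degree V1 E1) (max_degree V2 E2) + 1 \<le> fKst 1 (max_degree V1 E1) 1 (max_degree V2 E2)"
    using pos unfolding fKst_def by simp
  ultimately show ?thesis by linarith
qed

theorem mainTheorem7:
  fixes V1 :: "'a set" and E1 :: "'a \<Rightarrow> 'a \<Rightarrow> bool"
    and V2 :: "'b set" and E2 :: "'b \<Rightarrow> 'b \<Rightarrow> bool"
    and s1 t1 s2 t2 :: nat
  assumes g1: "sgraph V1 E1" and g2: "sgraph V2 E2"
    and st1: "1 \<le> s1" "s1 \<le> t1" and st2: "1 \<le> s2" "s2 \<le> t2"
    and K1: "contains_Kst V1 E1 s1 t1" and K2: "contains_Kst V2 E2 s2 t2"
  shows "max (degen V1 E1 + degen V2 E2 + degen V1 E1 * degen V2 E2)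
            (max (fKst s1 t1 s2 t2) (min (max_degree V1 E1) (max_degree V2 E2) + 1))
          \<le> degen (strong_prod_V V1 V2) (strong_prod_E V1 E1 V2 E2)
       \<and> degen (strong_prod_V V1 V2) (strong_prod_E V1 E1 V2 E2)
          \<le> degen V1 E1 + degen V2 E2
             + min (degen V1 E1 * max_degree V2 E2) (degen V2 E2 * max_degree V1 E1)"
proof -
  obtain A1 B1 where AB1: "biclique V1 E1 A1 B1" "card A1 = s1" "card B1 = t1"
    using contains_Kst_biclique[OF K1] st1 by auto
  obtain A2 B2 where AB2: "biclique V2 E2 A2 B2" "card A2 = s2" "card B2 = t2"
    using contains_Kst_biclique[OF K2] st2 by auto
  obtain a1 b1 a2 b2 where "a1 \<in> A1" "b1 \<in> B1" "a2 \<in> A2" "b2 \<in> B2"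
    using AB1(1) AB2(1) unfolding biclique_def by blast
  then have "E1 a1 b1" "E2 a2 b2" "V1 \<noteq> {}" "V2 \<noteq> {}"
    using AB1(1) AB2(1) unfolding biclique_def by blast+
  show ?thesis
    using degen_strong_prod_ge_degen[OF g1 g2 \<open>V1 \<noteq> {}\<close> \<open>V2 \<noteq> {}\<close>]
      degen_strong_prod_ge_fKst[OF g1 g2 AB1(1) _ AB2(1)]
      degen_strong_prod_ge_max_degree[OF g1 g2 \<open>E1 a1 b1\<close> \<open>E2 a2 b2\<close>]
      degen_strong_prod_le[OF g1 g2] AB1(2,3) AB2(2,3) st1(2) st2(2)
    by simp
qed

end
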